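(* Let $M$ be a graded generalized Eulerian $A_n(K)$-module which is finitely generated as an $R$-module. Then either $M=0$ or $M\cong R^m$ (as graded $R$-modules, with all free generators in degree $0$) for some $m\ge1$.
   Context: $K$ is a field of characteristic zero, $R=K[X_1,\dots,X_n]$ standard graded, $A_n(K)$ the Weyl algebra graded by $\deg X_i=1$, $\deg\partial_i=-1$; $\mathcal E_n=\sum_iX_i\partial_i$; $|z|$ is the degree of homogeneous $z$. A graded left $A_n(K)$-module $M$ is generalized Eulerian if for every homogeneous $z\in M$ there is $a\ge1$ with $(\mathcal E_n-|z|)^az=0$. *)

theory Defs
  imports Complex_Main "HOL-Library.Poly_Mapping"
begin

text \<open>The polynomial ring R = K[X_0,...,X_(n-1)]: polynomials are finitely supported
  maps from monomials (exponent vectors, nat =>0 nat) to coefficients, using only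
  variables with index < n.\<close>

definition polyR :: "nat \<Rightarrow> ((nat \<Rightarrow>\<^sub>0 nat) \<Rightarrow>\<^sub>0 'k::field) set" where
  "polyR n = {p. \<forall>\<alpha>\<in>Poly_Mapping.keys p. \<forall>i\<in>Poly_Mapping.keys \<alpha>. i < n}"

definition Xmon :: "nat \<Rightarrow> (nat \<Rightarrow> 'm \<Rightarrow> 'm) \<Rightarrow> (nat \<Rightarrow>\<^sub>0 nat) \<Rightarrow> 'm \<Rightarrow> 'm" where
  "Xmon n X \<alpha> = fold (\<lambda>i f. (X i ^^ Poly_Mapping.lookup \<alpha> i) \<circ> f) [0..<n] id"

definition pact :: "nat \<Rightarrow> ('k::field \<Rightarrow> 'm \<Rightarrow> 'm) \<Rightarrow> (nat \<Rightarrow> 'm \<Rightarrow> 'm)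
    \<Rightarrow> ((nat \<Rightarrow>\<^sub>0 nat) \<Rightarrow>\<^sub>0 'k) \<Rightarrow> 'm \<Rightarrow> 'm::ab_group_add" where
  "pact n smul X p v = (\<Sum>\<alpha>\<in>Poly_Mapping.keys p. smul (Poly_Mapping.lookup p \<alpha>) (Xmon n X \<alpha> v))"

definition weyl_module :: "nat \<Rightarrow> ('k::field \<Rightarrow> 'm \<Rightarrow> 'm::ab_group_add)
    \<Rightarrow> (nat \<Rightarrow> 'm \<Rightarrow> 'm) \<Rightarrow> (nat \<Rightarrow> 'm \<Rightarrow> 'm) \<Rightarrow> bool" where
  "weyl_module n smul X D \<longleftrightarrow>
     Vector_Spaces.vector_space smul \<and>
     (\<forall>i<n. Vector_Spaces.linear smul smul (X i) \<and> Vector_Spaces.linear smul smul (D i)) \<and>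
     (\<forall>i<n. \<forall>j<n. \<forall>v. X i (X j v) = X j (X i v)) \<and>
     (\<forall>i<n. \<forall>j<n. \<forall>v. D i (D j v) = D j (D i v)) \<and>
     (\<forall>i<n. \<forall>j<n. \<forall>v. D i (X j v) - X j (D i v) = (if i = j then v else 0))"

definition graded_weyl_module :: "nat \<Rightarrow> ('k::field \<Rightarrow> 'm \<Rightarrow> 'm::ab_group_add)
    \<Rightarrow> (nat \<Rightarrow> 'm \<Rightarrow> 'm) \<Rightarrow> (nat \<Rightarrow> 'm \<Rightarrow> 'm) \<Rightarrow> (int \<Rightarrow> 'm set) \<Rightarrow> bool" where
  "graded_weyl_module n smul X D Md \<longleftrightarrow>
     weyl_module n smul X D \<and>
     (\<forall>d. Modules.module.subspace smul (Md d)) \<and>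
     (\<forall>v. \<exists>!c :: int \<Rightarrow> 'm. finite {d. c d \<noteq> 0} \<and> (\<forall>d. c d \<in> Md d) \<and>
            v = (\<Sum>d\<in>{d. c d \<noteq> 0}. c d)) \<and>
     (\<forall>i<n. \<forall>d. \<forall>v\<in>Md d. X i v \<in> Md (d + 1)) \<and>
     (\<forall>i<n. \<forall>d. \<forall>v\<in>Md d. D i v \<in> Md (d - 1))"

definition euler_op :: "nat \<Rightarrow> (nat \<Rightarrow> 'm \<Rightarrow> 'm) \<Rightarrow> (nat \<Rightarrow> 'm \<Rightarrow> 'm) \<Rightarrow> 'm \<Rightarrow> 'm::ab_group_add" where
  "euler_op n X D v = (\<Sum>i<n. X i (D i v))"

definition generalized_eulerian :: "nat \<Rightarrow> ('k::field_char_0 \<Rightarrow> 'm \<Rightarrow> 'm::ab_group_add)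
    \<Rightarrow> (nat \<Rightarrow> 'm \<Rightarrow> 'm) \<Rightarrow> (nat \<Rightarrow> 'm \<Rightarrow> 'm) \<Rightarrow> (int \<Rightarrow> 'm set) \<Rightarrow> bool" where
  "generalized_eulerian n smul X D Md \<longleftrightarrow>
     (\<forall>d. \<forall>z\<in>Md d. \<exists>a::nat. a \<ge> 1 \<and>
        ((\<lambda>v. euler_op n X D v - smul (of_int d) v) ^^ a) z = 0)"

definition fin_gen_R :: "nat \<Rightarrow> ('k::field \<Rightarrow> 'm \<Rightarrow> 'm::ab_group_add) \<Rightarrow> (nat \<Rightarrow> 'm \<Rightarrow> 'm) \<Rightarrow> bool" where
  "fin_gen_R n smul X \<longleftrightarrow>
     (\<exists>G. finite G \<and> (\<forall>v. \<exists>c. (\<forall>g\<in>G. c g \<in> polyR n) \<and> v = (\<Sum>g\<in>G. pact n smul X (c g) g)))"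

text \<open>M is isomorphic, as a graded R-module, to R^m with all free generators in degree 0:
  there are e_0..e_(m-1) in M_0 such that (p_j) |-> sum_j p_j e_j is a bijection R^m -> M.
  (This map is R-linear and sends the standard basis to degree-0 elements, so it is a graded
  R-module isomorphism.)\<close>
definition free_deg0 :: "nat \<Rightarrow> ('k::field \<Rightarrow> 'm \<Rightarrow> 'm::ab_group_add) \<Rightarrow> (nat \<Rightarrow> 'm \<Rightarrow> 'm)
    \<Rightarrow> (int \<Rightarrow> 'm set) \<Rightarrow> nat \<Rightarrow> bool" where
  "free_deg0 n smul X Md m \<longleftrightarrow>
     (\<exists>e :: nat \<Rightarrow> 'm. (\<forall>j<m. e j \<in> Md 0) \<and>
        bij_betw (\<lambda>ps. \<Sum>j<m. pact n smul X (ps j) (e j))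
          {ps. \<forall>j. (j < m \<longrightarrow> ps j \<in> polyR n) \<and> (m \<le> j \<longrightarrow> ps j = 0)} UNIV)"

end

theory Submission
  imports Defs
begin

text \<open>On a homogeneous element of nonzero degree d the Euler operator E = \<Sum>i X_i D_i equals
  d plus a nilpotent operator, so it is invertible there: every element of M_d, d \<noteq> 0, lies in
  \<Sum>i X_i M_(d-1). Finite generation bounds the degrees of M from below, hence climbing up from
  the bound M vanishes in all negative degrees, M_0 is finite dimensional and killed by every D_i.
  Climbing up from degree 0 instead shows that a K-basis e_1, ..., e_m of M_0 generates M over R.
  The e_j are also R-free: in a relation \<Sum>j p_j e_j = 0, the operator D^\<alpha> for a monomial \<alpha>
  of maximal degree among the coefficients kills all other monomials and leaves \<alpha>! times the
  \<alpha>-coefficients of the p_j, which vanish by linear independence of the e_j.\<close>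

lemma polyR_add: "p \<in> polyR n \<Longrightarrow> q \<in> polyR n \<Longrightarrow> p + q \<in> polyR n"
  using keys_add[of p q] by (auto simp: polyR_def)

lemma polyR_diff: "p \<in> polyR n \<Longrightarrow> q \<in> polyR n \<Longrightarrow> p - q \<in> polyR n"
  using keys_diff[of p q] by (auto simp: polyR_def)

lemma single_in_polyR: "Poly_Mapping.keys \<alpha> \<subseteq> {..<n} \<Longrightarrow> Poly_Mapping.single \<alpha> c \<in> polyR n"
  by (auto simp: polyR_def)

lemma count_list_Cons_eq_lookup_iff:
  assumes "Poly_Mapping.lookup \<beta> i \<noteq> 0"
  shows "(\<forall>j. count_list (i # L) j = Poly_Mapping.lookup \<beta> j) \<longleftrightarrow>
    (\<forall>j. count_list L j = Poly_Mapping.lookup (\<beta> - Poly_Mapping.single i 1) j)"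
proof -
  have "count_list (i # L) j = Poly_Mapping.lookup \<beta> j \<longleftrightarrow>
      count_list L j = Poly_Mapping.lookup (\<beta> - Poly_Mapping.single i 1) j" for j
    using assms by (auto simp: lookup_minus lookup_single)
  then show ?thesis
    by blast
qed

lemma (in vector_space) independent_image_coeff_zero:
  assumes "inj_on e I" "finite I" "independent (e ` I)" "(\<Sum>i\<in>I. scale (c i) (e i)) = 0" "i \<in> I"
  shows "c i = 0"
proof -
  define u where "u v = c (the_inv_into I e v)" for v
  have "(\<Sum>v\<in>e ` I. scale (u v) v) = (\<Sum>i\<in>I. scale (c i) (e i))"
    using assms(1) by (simp add: sum.reindex u_def the_inv_into_f_f)
  then have "u (e i) = 0"
    using assms by (intro independentD[of "e ` I" "e ` I" u]) auto
  then show ?thesis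
    using assms(1,5) by (simp add: u_def the_inv_into_f_f)
qed

section \<open>The Weyl algebra action\<close>

lemma (in vector_space) linear_funpow:
  "Vector_Spaces.linear scale scale f \<Longrightarrow> Vector_Spaces.linear scale scale (f ^^ m)"
  by (induct m) (simp_all add: linear_id Vector_Spaces.linear_compose)

locale weyl_action = vector_space smul
  for smul :: "'k::field_char_0 \<Rightarrow> 'm::ab_group_add \<Rightarrow> 'm" +
  fixes n :: nat and X D :: "nat \<Rightarrow> 'm \<Rightarrow> 'm"
  assumes linear_X: "i < n \<Longrightarrow> Vector_Spaces.linear smul smul (X i)"
    and linear_D: "i < n \<Longrightarrow> Vector_Spaces.linear smul smul (D i)"
    and X_commute: "i < n \<Longrightarrow> j < n \<Longrightarrow> X i (X j v) = X j (X i v)"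
    and D_X_commutator: "i < n \<Longrightarrow> j < n \<Longrightarrow> D i (X j v) - X j (D i v) = (if i = j then v else 0)"

sublocale weyl_action \<subseteq> vector_space_pair smul smul ..

context weyl_action
begin

lemma Xpow_X_commute: "i < n \<Longrightarrow> j < n \<Longrightarrow> (X i ^^ m) (X j v) = X j ((X i ^^ m) v)"
  by (induct m) (simp_all add: X_commute)

lemma D_Xpow_other: "i < n \<Longrightarrow> j < n \<Longrightarrow> i \<noteq> j \<Longrightarrow> D i ((X j ^^ m) v) = (X j ^^ m) (D i v)"
  by (induct m) (simp_all, metis D_X_commutator eq_iff_diff_eq_0)

lemma D_X_same: "i < n \<Longrightarrow> D i (X i v) = X i (D i v) + v"
  using D_X_commutator[of i i v] by (simp add: diff_eq_eq add.commute)

lemma D_Xpow_same: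
  assumes "i < n"
  shows "D i ((X i ^^ m) v) = (X i ^^ m) (D i v) + smul (of_nat m) ((X i ^^ (m - 1)) v)"
proof (induct m)
  case 0
  then show ?case by simp
next
  case (Suc m)
  have "D i ((X i ^^ Suc m) v) = X i (D i ((X i ^^ m) v)) + (X i ^^ m) v"
    using assms by (simp add: D_X_same)
  also have "\<dots> = (X i ^^ Suc m) (D i v) + smul (of_nat m) ((X i ^^ m) v) + (X i ^^ m) v"
    using assms Suc by (cases m) (simp_all add: linear_add linear_scale linear_X)
  finally show ?case
    by (simp add: scale_left_distrib add.assoc)
qed

definition Xprod :: "(nat \<Rightarrow> nat) \<Rightarrow> nat list \<Rightarrow> 'm \<Rightarrow> 'm" where
  "Xprod k xs = fold (\<lambda>i f. (X i ^^ k i) \<circ> f) xs id"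

lemma Xprod_Nil [simp]: "Xprod k [] = id"
  by (simp add: Xprod_def)

lemma Xprod_snoc: "Xprod k (xs @ [x]) = (X x ^^ k x) \<circ> Xprod k xs"
  by (simp add: Xprod_def)

lemma Xmon_eq_Xprod: "Xmon n X \<alpha> = Xprod (Poly_Mapping.lookup \<alpha>) [0..<n]"
  by (simp add: Xmon_def Xprod_def)

lemma linear_Xprod: "set xs \<subseteq> {..<n} \<Longrightarrow> Vector_Spaces.linear smul smul (Xprod k xs)"
  by (induct xs rule: rev_induct)
    (auto simp: Xprod_snoc linear_id linear_funpow linear_X intro: Vector_Spaces.linear_compose)

lemma Xprod_cong: "(\<And>i. i \<in> set xs \<Longrightarrow> k i = k' i) \<Longrightarrow> Xprod k xs = Xprod k' xs"
  unfolding Xprod_def by (induct xs rule: rev_induct) auto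

lemma Xprod_Suc:
  assumes "set xs \<subseteq> {..<n}" "distinct xs" "i \<in> set xs"
  shows "Xprod (k(i := Suc (k i))) xs v = X i (Xprod k xs v)"
  using assms
proof (induct xs rule: rev_induct)
  case Nil
  then show ?case by simp
next
  case (snoc x xs)
  show ?case
  proof (cases "x = i")
    case True
    then have "Xprod (k(i := Suc (k i))) xs = Xprod k xs"
      using snoc.prems by (intro Xprod_cong) auto
    then show ?thesis using True by (simp add: Xprod_snoc fun_upd_same del: fun_upd_apply)
  next
    case False
    moreover have "i < n" "x < n"
      using snoc.prems by auto
    ultimately show ?thesis
      using snoc by (simp add: Xprod_snoc Xpow_X_commute)
  qed
qed

lemma D_Xprod:
  assumes "set xs \<subseteq> {..<n}" "distinct xs" "i < n"
  shows "D i (Xprod k xs v) = Xprod k xs (D i v) +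
     (if i \<in> set xs then smul (of_nat (k i)) (Xprod (k(i := k i - 1)) xs v) else 0)"
  using assms
proof (induct xs rule: rev_induct)
  case Nil
  then show ?case by simp
next
  case (snoc x xs)
  then have IH: "D i (Xprod k xs v) = Xprod k xs (D i v) +
     (if i \<in> set xs then smul (of_nat (k i)) (Xprod (k(i := k i - 1)) xs v) else 0)"
    and x: "x < n"
    by auto
  show ?case
  proof (cases "x = i")
    case True
    then have "Xprod (k(i := k i - 1)) xs = Xprod k xs"
      using snoc.prems by (intro Xprod_cong) auto
    then show ?thesis
      using True IH snoc.prems by (simp add: Xprod_snoc D_Xpow_same)
  next
    case False
    then show ?thesis
      using IH x snoc.prems
      by (simp add: Xprod_snoc D_Xpow_other linear_add linear_scale linear_0 linear_funpow linear_X)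
  qed
qed

lemma linear_Xmon: "Vector_Spaces.linear smul smul (Xmon n X \<alpha>)"
  by (simp add: Xmon_eq_Xprod linear_Xprod atLeast0LessThan)

lemma Xmon_zero [simp]: "Xmon n X 0 v = v"
proof -
  have "Xprod (\<lambda>_. 0) xs = id" for xs
    by (induct xs rule: rev_induct) (simp_all add: Xprod_snoc)
  then show ?thesis
    by (simp add: Xmon_eq_Xprod lookup_zero[abs_def])
qed

lemma Xmon_add_single:
  assumes "i < n"
  shows "Xmon n X (\<alpha> + Poly_Mapping.single i 1) v = X i (Xmon n X \<alpha> v)"
proof -
  have "Poly_Mapping.lookup (\<alpha> + Poly_Mapping.single i 1) =
        (Poly_Mapping.lookup \<alpha>)(i := Suc (Poly_Mapping.lookup \<alpha> i))"
    by (auto simp: lookup_add lookup_single)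
  then show ?thesis
    using assms by (simp add: Xmon_eq_Xprod Xprod_Suc atLeast0LessThan del: fun_upd_apply)
qed

lemma lookup_minus_single:
  "Poly_Mapping.lookup (\<alpha> - Poly_Mapping.single i 1) =
   (Poly_Mapping.lookup \<alpha>)(i := Poly_Mapping.lookup \<alpha> i - 1)"
  by (auto simp: lookup_minus lookup_single)

lemma D_Xmon:
  assumes "i < n" "D i v = 0"
  shows "D i (Xmon n X \<alpha> v) =
    smul (of_nat (Poly_Mapping.lookup \<alpha> i)) (Xmon n X (\<alpha> - Poly_Mapping.single i 1) v)"
  unfolding Xmon_eq_Xprod lookup_minus_single
  using assms by (simp add: D_Xprod linear_0 linear_Xprod atLeast0LessThan del: fun_upd_apply)

definition mdeg :: "(nat \<Rightarrow>\<^sub>0 nat) \<Rightarrow> nat" where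
  "mdeg \<alpha> = (\<Sum>i<n. Poly_Mapping.lookup \<alpha> i)"

definition mfact :: "(nat \<Rightarrow>\<^sub>0 nat) \<Rightarrow> nat" where
  "mfact \<alpha> = (\<Prod>i<n. fact (Poly_Mapping.lookup \<alpha> i))"

lemma mdeg_eq_0_imp_zero:
  assumes "Poly_Mapping.keys \<alpha> \<subseteq> {..<n}" "mdeg \<alpha> = 0"
  shows "\<alpha> = 0"
proof (rule poly_mapping_eqI)
  fix i
  show "Poly_Mapping.lookup \<alpha> i = Poly_Mapping.lookup 0 i"
  proof (cases "i < n")
    case True
    then show ?thesis using assms(2) by (simp add: mdeg_def)
  next
    case False
    then show ?thesis using assms(1) by (auto simp flip: not_in_keys_iff_lookup_eq_zero)
  qed
qed

lemma mdeg_minus_single: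
  assumes "i < n" "Poly_Mapping.lookup \<alpha> i \<noteq> 0"
  shows "mdeg (\<alpha> - Poly_Mapping.single i 1) = mdeg \<alpha> - 1"
proof -
  have "mdeg \<alpha> = Poly_Mapping.lookup \<alpha> i + (\<Sum>j\<in>{..<n} - {i}. Poly_Mapping.lookup \<alpha> j)"
    unfolding mdeg_def using assms(1) by (subst sum.remove[of _ i]) auto
  moreover have "mdeg (\<alpha> - Poly_Mapping.single i 1) =
      (Poly_Mapping.lookup \<alpha> i - 1) + (\<Sum>j\<in>{..<n} - {i}. Poly_Mapping.lookup \<alpha> j)"
    unfolding mdeg_def lookup_minus_single using assms(1)
    by (subst sum.remove[of _ i]) (auto intro: sum.cong)
  ultimately show ?thesis using assms(2) by simp
qed

lemma mfact_minus_single: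
  assumes "i < n" "Poly_Mapping.lookup \<alpha> i \<noteq> 0"
  shows "Poly_Mapping.lookup \<alpha> i * mfact (\<alpha> - Poly_Mapping.single i 1) = mfact \<alpha>"
proof -
  have "mfact \<alpha> = fact (Poly_Mapping.lookup \<alpha> i) * (\<Prod>j\<in>{..<n} - {i}. fact (Poly_Mapping.lookup \<alpha> j))"
    unfolding mfact_def using assms(1) by (subst prod.remove[of _ i]) auto
  moreover have "mfact (\<alpha> - Poly_Mapping.single i 1) =
      fact (Poly_Mapping.lookup \<alpha> i - 1) * (\<Prod>j\<in>{..<n} - {i}. fact (Poly_Mapping.lookup \<alpha> j))"
    unfolding mfact_def lookup_minus_single using assms(1)
    by (subst prod.remove[of _ i]) (auto intro: prod.cong)
  moreover have "Poly_Mapping.lookup \<alpha> i * fact (Poly_Mapping.lookup \<alpha> i - 1) =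
      (fact (Poly_Mapping.lookup \<alpha> i) :: nat)"
    using assms(2) by (simp add: fact_reduce)
  ultimately show ?thesis by (simp add: mult.assoc)
qed

lemma pact_eq_sum_superset:
  "finite S \<Longrightarrow> Poly_Mapping.keys p \<subseteq> S \<Longrightarrow>
   pact n smul X p v = (\<Sum>\<alpha>\<in>S. smul (Poly_Mapping.lookup p \<alpha>) (Xmon n X \<alpha> v))"
  unfolding pact_def
  by (rule sum.mono_neutral_left) (auto simp: not_in_keys_iff_lookup_eq_zero)

lemma pact_zero [simp]: "pact n smul X 0 v = 0"
  by (simp add: pact_def)

lemma pact_single: "pact n smul X (Poly_Mapping.single \<alpha> c) v = smul c (Xmon n X \<alpha> v)"
  by (simp add: pact_def)

lemma pact_add: "pact n smul X (p + q) v = pact n smul X p v + pact n smul X q v"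
proof -
  let ?S = "Poly_Mapping.keys p \<union> Poly_Mapping.keys q"
  have "pact n smul X (p + q) v = (\<Sum>\<alpha>\<in>?S. smul (Poly_Mapping.lookup (p + q) \<alpha>) (Xmon n X \<alpha> v))"
    using keys_add[of p q] by (intro pact_eq_sum_superset) auto
  also have "\<dots> = (\<Sum>\<alpha>\<in>?S. smul (Poly_Mapping.lookup p \<alpha>) (Xmon n X \<alpha> v)) +
      (\<Sum>\<alpha>\<in>?S. smul (Poly_Mapping.lookup q \<alpha>) (Xmon n X \<alpha> v))"
    by (simp add: lookup_add scale_left_distrib sum.distrib)
  also have "\<dots> = pact n smul X p v + pact n smul X q v"
    by (subst (1 2) pact_eq_sum_superset[of ?S]) auto
  finally show ?thesis .
qed

lemma pact_diff: "pact n smul X (p - q) v = pact n smul X p v - pact n smul X q v"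
  by (metis pact_add diff_add_cancel eq_diff_eq)

definition Dword :: "nat list \<Rightarrow> 'm \<Rightarrow> 'm" where
  "Dword L v = foldl (\<lambda>w i. D i w) v L"

lemma Dword_Nil [simp]: "Dword [] = id"
  by (simp add: Dword_def fun_eq_iff)

lemma Dword_Cons: "Dword (i # L) = Dword L \<circ> D i"
  by (simp add: Dword_def fun_eq_iff)

lemma linear_Dword: "set L \<subseteq> {..<n} \<Longrightarrow> Vector_Spaces.linear smul smul (Dword L)"
  by (induct L) (auto simp: Dword_Cons linear_id intro!: Vector_Spaces.linear_compose linear_D)

lemma exists_word:
  assumes "Poly_Mapping.keys \<alpha> \<subseteq> {..<n}"
  shows "\<exists>L. set L \<subseteq> {..<n} \<and> length L = mdeg \<alpha> \<and> (\<forall>i. count_list L i = Poly_Mapping.lookup \<alpha> i)"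
proof (intro exI conjI allI)
  let ?L = "concat (map (\<lambda>i. replicate (Poly_Mapping.lookup \<alpha> i) i) [0..<n])"
  have count_replicate: "count_list (replicate k i) j = (if i = j then k else 0)" for k i j :: nat
    by (induct k) auto
  show "set ?L \<subseteq> {..<n}"
    by auto
  show "length ?L = mdeg \<alpha>"
    by (simp add: length_concat mdeg_def sum_list_sum_nth atLeast0LessThan)
  fix j
  have "count_list ?L j = (\<Sum>i<n. if i = j then Poly_Mapping.lookup \<alpha> i else 0)"
    by (simp add: count_list_concat count_replicate sum_list_sum_nth atLeast0LessThan)
  also have "\<dots> = Poly_Mapping.lookup \<alpha> j"
    using assms by (auto simp flip: not_in_keys_iff_lookup_eq_zero)
  finally show "count_list ?L j = Poly_Mapping.lookup \<alpha> j" .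
qed

lemma Dword_Xmon:
  assumes "set L \<subseteq> {..<n}" "\<forall>i<n. D i e = 0"
    and "Poly_Mapping.keys \<beta> \<subseteq> {..<n}" "mdeg \<beta> \<le> length L"
  shows "Dword L (Xmon n X \<beta> e) =
    (if \<forall>j. count_list L j = Poly_Mapping.lookup \<beta> j then smul (of_nat (mfact \<beta>)) e else 0)"
  using assms
proof (induct L arbitrary: \<beta>)
  case Nil
  then have "\<beta> = 0"
    by (intro mdeg_eq_0_imp_zero) auto
  then show ?case
    by (simp add: mfact_def)
next
  case (Cons i L)
  let ?\<beta>' = "\<beta> - Poly_Mapping.single i 1"
  have i: "i < n" and L: "set L \<subseteq> {..<n}"
    using Cons.prems by auto
  have "Dword (i # L) (Xmon n X \<beta> e) =
      smul (of_nat (Poly_Mapping.lookup \<beta> i)) (Dword L (Xmon n X ?\<beta>' e))"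
    using Cons.prems(2) i by (simp add: Dword_Cons D_Xmon linear_scale linear_Dword[OF L])
  also have "\<dots> = (if \<forall>j. count_list (i # L) j = Poly_Mapping.lookup \<beta> j
      then smul (of_nat (mfact \<beta>)) e else 0)"
  proof (cases "Poly_Mapping.lookup \<beta> i = 0")
    case True
    then have "\<not> (\<forall>j. count_list (i # L) j = Poly_Mapping.lookup \<beta> j)"
      by (metis count_list.simps(2) add_is_0 one_neq_zero)
    then show ?thesis
      using True by (subst if_not_P) simp_all
  next
    case False
    have "Poly_Mapping.keys ?\<beta>' \<subseteq> {..<n}"
      using Cons.prems(3) keys_diff[of \<beta> "Poly_Mapping.single i 1"] i by auto
    moreover have "mdeg ?\<beta>' \<le> length L"
      using Cons.prems(4) mdeg_minus_single[OF i False] by simp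
    ultimately have IH: "Dword L (Xmon n X ?\<beta>' e) = (if \<forall>j. count_list L j = Poly_Mapping.lookup ?\<beta>' j
        then smul (of_nat (mfact ?\<beta>')) e else 0)"
      using Cons.hyps L Cons.prems(2) by blast
    moreover note count_list_Cons_eq_lookup_iff[OF False, of L]
    moreover have "smul (of_nat (Poly_Mapping.lookup \<beta> i)) (smul (of_nat (mfact ?\<beta>')) e) =
        smul (of_nat (mfact \<beta>)) e"
      by (simp only: scale_scale of_nat_mult[symmetric] mfact_minus_single[OF i False])
    ultimately show ?thesis
      unfolding IH by simp
  qed
  finally show ?case .
qed

definition Rspan :: "'m set \<Rightarrow> 'm set" where
  "Rspan E = span {Xmon n X \<alpha> e | \<alpha> e. e \<in> E \<and> Poly_Mapping.keys \<alpha> \<subseteq> {..<n}}"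

lemma subspace_Rspan: "subspace (Rspan E)"
  by (simp add: Rspan_def subspace_span)

lemma subset_Rspan: "E \<subseteq> Rspan E"
proof
  fix e
  assume "e \<in> E"
  then have "Xmon n X 0 e \<in> {Xmon n X \<alpha> e | \<alpha> e. e \<in> E \<and> Poly_Mapping.keys \<alpha> \<subseteq> {..<n}}"
    by (intro CollectI exI[of _ 0] exI[of _ e]) simp
  then show "e \<in> Rspan E"
    unfolding Rspan_def by (simp add: span_base)
qed

lemma X_Rspan:
  assumes "i < n" "y \<in> Rspan E"
  shows "X i y \<in> Rspan E"
  using assms(2) unfolding Rspan_def
proof (induct rule: span_induct_alt)
  case base
  then show ?case using assms(1) by (simp add: linear_0 linear_X span_zero)
next
  case (step c x y)
  then obtain \<alpha> e where x: "x = Xmon n X \<alpha> e" "e \<in> E" "Poly_Mapping.keys \<alpha> \<subseteq> {..<n}"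
    by blast
  have "X i x = Xmon n X (\<alpha> + Poly_Mapping.single i 1) e"
    using x(1) Xmon_add_single[OF assms(1)] by simp
  moreover have "Poly_Mapping.keys (\<alpha> + Poly_Mapping.single i 1) \<subseteq> {..<n}"
    using x(3) assms(1) keys_add[of \<alpha> "Poly_Mapping.single i 1"] by auto
  ultimately have "X i x \<in> {Xmon n X \<alpha> e | \<alpha> e. e \<in> E \<and> Poly_Mapping.keys \<alpha> \<subseteq> {..<n}}"
    using x(2) by blast
  then show ?case
    using step assms(1) by (simp add: linear_add linear_scale linear_X span_add span_scale span_base)
qed

definition poly_tuples :: "nat \<Rightarrow> (nat \<Rightarrow> (nat \<Rightarrow>\<^sub>0 nat) \<Rightarrow>\<^sub>0 'k) set" where
  "poly_tuples m = {ps. \<forall>j. (j < m \<longrightarrow> ps j \<in> polyR n) \<and> (m \<le> j \<longrightarrow> ps j = 0)}"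

definition coord_sum :: "(nat \<Rightarrow> 'm) \<Rightarrow> nat \<Rightarrow> (nat \<Rightarrow> (nat \<Rightarrow>\<^sub>0 nat) \<Rightarrow>\<^sub>0 'k) \<Rightarrow> 'm" where
  "coord_sum e m ps = (\<Sum>j<m. pact n smul X (ps j) (e j))"

lemma Rspan_subset_coord_sum_image: "Rspan (e ` {..<m}) \<subseteq> coord_sum e m ` poly_tuples m"
proof
  fix y
  assume "y \<in> Rspan (e ` {..<m})"
  then show "y \<in> coord_sum e m ` poly_tuples m"
    unfolding Rspan_def
  proof (induct rule: span_induct_alt)
    case base
    have "(\<lambda>_. 0) \<in> poly_tuples m"
      by (simp add: poly_tuples_def polyR_def)
    then show ?case
      by (force simp: coord_sum_def)
  next
    case (step c x y)
    obtain ps where ps: "ps \<in> poly_tuples m" "y = coord_sum e m ps"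
      using step by blast
    obtain \<alpha> j where x: "x = Xmon n X \<alpha> (e j)" "j < m" "Poly_Mapping.keys \<alpha> \<subseteq> {..<n}"
      using step by blast
    define ps' where "ps' l = ps l + (if l = j then Poly_Mapping.single \<alpha> c else 0)" for l
    have "ps' \<in> poly_tuples m"
      using ps(1) x(2,3) by (auto simp: poly_tuples_def ps'_def intro: polyR_add single_in_polyR)
    moreover have "coord_sum e m ps' = smul c x + y"
      using x(1,2) ps(2)
      by (simp add: coord_sum_def ps'_def pact_add sum.distrib pact_single if_distrib[of "\<lambda>p. pact n smul X p _"]
          sum.delta add.commute cong: if_cong)
    ultimately show ?case
      by (metis image_eqI)
  qed
qed

lemma Dword_coord_sum:
  assumes e: "\<forall>j<m. \<forall>i<n. D i (e j) = 0" and ps: "ps \<in> poly_tuples m"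
    and \<alpha>: "Poly_Mapping.keys \<alpha> \<subseteq> {..<n}" "\<forall>j<m. \<forall>\<beta>\<in>Poly_Mapping.keys (ps j). mdeg \<beta> \<le> mdeg \<alpha>"
    and L: "set L \<subseteq> {..<n}" "length L = mdeg \<alpha>" "\<forall>i. count_list L i = Poly_Mapping.lookup \<alpha> i"
  shows "Dword L (coord_sum e m ps) =
    (\<Sum>j<m. smul (Poly_Mapping.lookup (ps j) \<alpha> * of_nat (mfact \<alpha>)) (e j))"
proof -
  have "Dword L (pact n smul X (ps j) (e j)) =
      smul (Poly_Mapping.lookup (ps j) \<alpha> * of_nat (mfact \<alpha>)) (e j)" if j: "j < m" for j
  proof -
    let ?S = "insert \<alpha> (Poly_Mapping.keys (ps j))"
    have Dword_Xmon_e: "Dword L (Xmon n X \<beta> (e j)) =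
        (if \<beta> = \<alpha> then smul (of_nat (mfact \<alpha>)) (e j) else 0)" if "\<beta> \<in> ?S" for \<beta>
    proof -
      have "Poly_Mapping.keys \<beta> \<subseteq> {..<n}" "mdeg \<beta> \<le> length L"
        using that j ps \<alpha> L(2) by (auto simp: poly_tuples_def polyR_def)
      moreover have "(\<forall>i. count_list L i = Poly_Mapping.lookup \<beta> i) \<longleftrightarrow> \<beta> = \<alpha>"
        using L(3) poly_mapping_eqI[of \<alpha> \<beta>] by auto
      ultimately show ?thesis
        using Dword_Xmon[OF L(1)] e j by auto
    qed
    have "Dword L (pact n smul X (ps j) (e j)) =
        (\<Sum>\<beta>\<in>?S. smul (Poly_Mapping.lookup (ps j) \<beta>) (Dword L (Xmon n X \<beta> (e j))))"
      by (subst pact_eq_sum_superset[of ?S]) (auto simp: linear_sum[OF linear_Dword[OF L(1)]]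
          linear_scale[OF linear_Dword[OF L(1)]])
    also have "\<dots> = (\<Sum>\<beta>\<in>?S. if \<beta> = \<alpha>
        then smul (Poly_Mapping.lookup (ps j) \<alpha> * of_nat (mfact \<alpha>)) (e j) else 0)"
      using Dword_Xmon_e by (intro sum.cong) (simp_all add: scale_scale)
    finally show ?thesis
      by simp
  qed
  then show ?thesis
    by (simp add: coord_sum_def linear_sum[OF linear_Dword[OF L(1)]])
qed

lemma coord_sum_eq_0_imp_zero:
  assumes e: "\<forall>j<m. \<forall>i<n. D i (e j) = 0" "inj_on e {..<m}" "independent (e ` {..<m})"
    and ps: "ps \<in> poly_tuples m" "coord_sum e m ps = 0"
  shows "ps j = 0"
proof (rule ccontr)
  assume "ps j \<noteq> 0"
  moreover have "j < m"
    using ps(1) calculation by (auto simp: poly_tuples_def not_less)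
  define K where "K = (\<Union>j<m. Poly_Mapping.keys (ps j))"
  have "finite K" "K \<noteq> {}"
    using \<open>ps j \<noteq> 0\<close> \<open>j < m\<close> by (auto simp: K_def)
  then obtain \<alpha> where "\<alpha> \<in> K" "mdeg \<alpha> = Max (mdeg ` K)"
    by (metis (mono_tags, lifting) Max_in finite_imageI image_iff image_is_empty)
  then have \<alpha>_max: "\<forall>\<beta>\<in>K. mdeg \<beta> \<le> mdeg \<alpha>"
    using \<open>finite K\<close> by simp
  obtain l where l: "l < m" "\<alpha> \<in> Poly_Mapping.keys (ps l)"
    using \<open>\<alpha> \<in> K\<close> by (auto simp: K_def)
  have \<alpha>_keys: "Poly_Mapping.keys \<alpha> \<subseteq> {..<n}"
    using ps(1) l by (auto simp: poly_tuples_def polyR_def)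
  then obtain L where L: "set L \<subseteq> {..<n}" "length L = mdeg \<alpha>"
      "\<forall>i. count_list L i = Poly_Mapping.lookup \<alpha> i"
    using exists_word by blast
  have "(\<Sum>j<m. smul (Poly_Mapping.lookup (ps j) \<alpha> * of_nat (mfact \<alpha>)) (e j)) = 0"
    using Dword_coord_sum[OF e(1) ps(1) \<alpha>_keys _ L] \<alpha>_max ps(2)
    by (auto simp: K_def linear_0[OF linear_Dword[OF L(1)]])
  then have "Poly_Mapping.lookup (ps l) \<alpha> * of_nat (mfact \<alpha>) = 0"
    using l(1) by (intro independent_image_coeff_zero[OF e(2) _ e(3)]) auto
  moreover have "mfact \<alpha> \<noteq> 0"
    by (simp add: mfact_def)
  ultimately show False
    using l(2) by (simp add: in_keys_iff)
qed

lemma inj_on_coord_sum: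
  assumes "\<forall>j<m. \<forall>i<n. D i (e j) = 0" "inj_on e {..<m}" "independent (e ` {..<m})"
  shows "inj_on (coord_sum e m) (poly_tuples m)"
proof (rule inj_onI)
  fix ps qs
  assume ps: "ps \<in> poly_tuples m" and qs: "qs \<in> poly_tuples m"
    and eq: "coord_sum e m ps = coord_sum e m qs"
  have "(\<lambda>j. ps j - qs j) \<in> poly_tuples m"
    using ps qs by (auto simp: poly_tuples_def intro: polyR_diff)
  moreover have "coord_sum e m (\<lambda>j. ps j - qs j) = 0"
    using eq by (simp add: coord_sum_def pact_diff sum_subtractf)
  ultimately have "ps j - qs j = 0" for j
    using coord_sum_eq_0_imp_zero[OF assms] by blast
  then show "ps = qs"
    by (simp add: fun_eq_iff)
qed

end

section \<open>Graded modules\<close>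

locale graded_weyl_action = weyl_action smul n X D
  for smul :: "'k::field_char_0 \<Rightarrow> 'm::ab_group_add \<Rightarrow> 'm" and n X D +
  fixes Md :: "int \<Rightarrow> 'm set"
  assumes subspace_Md: "subspace (Md d)"
    and graded_decomp: "\<exists>!c :: int \<Rightarrow> 'm. finite {d. c d \<noteq> 0} \<and> (\<forall>d. c d \<in> Md d) \<and>
      v = (\<Sum>d\<in>{d. c d \<noteq> 0}. c d)"
    and X_Md: "i < n \<Longrightarrow> v \<in> Md d \<Longrightarrow> X i v \<in> Md (d + 1)"
    and D_Md: "i < n \<Longrightarrow> v \<in> Md d \<Longrightarrow> D i v \<in> Md (d - 1)"
begin

lemma homogeneous_component:
  assumes A: "finite A" and f: "\<And>x. x \<in> A \<Longrightarrow> f x \<in> Md (h x)"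
    and v: "v \<in> Md d" "v = (\<Sum>x\<in>A. f x)"
  shows "v = (\<Sum>x\<in>{x\<in>A. h x = d}. f x)"
proof -
  define c where "c k = (\<Sum>x\<in>{x\<in>A. h x = k}. f x)" for k
  define c' where "c' k = (if k = d then v else 0)" for k
  have c_Md: "c k \<in> Md k" for k
    unfolding c_def by (rule subspace_sum[OF subspace_Md]) (use f in fastforce)
  have supp_c: "{k. c k \<noteq> 0} \<subseteq> h ` A"
  proof
    fix k
    assume "k \<in> {k. c k \<noteq> 0}"
    then have "{x\<in>A. h x = k} \<noteq> {}"
      unfolding c_def by (metis (mono_tags) mem_Collect_eq sum.empty)
    then show "k \<in> h ` A"
      by auto
  qed
  have "(\<Sum>k\<in>{k. c k \<noteq> 0}. c k) = (\<Sum>k\<in>h ` A. c k)"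
    by (rule sum.mono_neutral_left) (use A supp_c in auto)
  also have "\<dots> = v"
    unfolding c_def v(2) by (rule sum.image_gen[symmetric]) (rule A)
  finally have "finite {k. c k \<noteq> 0} \<and> (\<forall>k. c k \<in> Md k) \<and> v = (\<Sum>k\<in>{k. c k \<noteq> 0}. c k)"
    using A supp_c c_Md finite_subset by blast
  moreover have "finite {k. c' k \<noteq> 0} \<and> (\<forall>k. c' k \<in> Md k) \<and> v = (\<Sum>k\<in>{k. c' k \<noteq> 0}. c' k)"
  proof -
    have "{k. c' k \<noteq> 0} = (if v = 0 then {} else {d})"
      by (auto simp: c'_def)
    then show ?thesis
      using v(1) subspace_0[OF subspace_Md] by (auto simp: c'_def)
  qed
  ultimately have "c d = c' d"
    using graded_decomp[of v] by blast
  then show ?thesis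
    by (simp add: c_def c'_def)
qed

lemma Xpow_Md: "i < n \<Longrightarrow> v \<in> Md d \<Longrightarrow> (X i ^^ m) v \<in> Md (d + int m)"
proof (induct m)
  case (Suc m)
  then show ?case
    using X_Md[of i "(X i ^^ m) v" "d + int m"] by (simp add: ac_simps)
qed simp

lemma Xprod_Md:
  "set xs \<subseteq> {..<n} \<Longrightarrow> distinct xs \<Longrightarrow> v \<in> Md d \<Longrightarrow> Xprod k xs v \<in> Md (d + int (\<Sum>i\<in>set xs. k i))"
proof (induct xs rule: rev_induct)
  case (snoc x xs)
  then show ?case
    using Xpow_Md[of x "Xprod k xs v" "d + int (\<Sum>i\<in>set xs. k i)" "k x"] by (simp add: Xprod_snoc ac_simps)
qed simp

lemma Xmon_Md: "v \<in> Md d \<Longrightarrow> Xmon n X \<alpha> v \<in> Md (d + int (mdeg \<alpha>))"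
  using Xprod_Md[of "[0..<n]" v d "Poly_Mapping.lookup \<alpha>"]
  by (simp add: Xmon_eq_Xprod mdeg_def atLeast0LessThan)

text \<open>The multiples X^\<alpha> h of degree d, where each pair (k, h) \<in> H is read as a
  generator h placed in degree k.\<close>
definition degree_terms :: "(int \<times> 'm) set \<Rightarrow> int \<Rightarrow> 'm set" where
  "degree_terms H d = {Xmon n X \<alpha> h | \<alpha> k h.
     (k, h) \<in> H \<and> Poly_Mapping.keys \<alpha> \<subseteq> {..<n} \<and> k + int (mdeg \<alpha>) = d}"

lemma sum_in_span_degree_terms:
  assumes "finite A" "v \<in> Md d" "v = (\<Sum>x\<in>A. smul (a x) (Xmon n X (mon x) (gen x)))"
    and "\<And>x. x \<in> A \<Longrightarrow> (deg x, gen x) \<in> H \<and> Poly_Mapping.keys (mon x) \<subseteq> {..<n}"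
    and "\<And>k h. (k, h) \<in> H \<Longrightarrow> h \<in> Md k"
  shows "v \<in> span (degree_terms H d)"
proof -
  have "v = (\<Sum>x\<in>{x\<in>A. deg x + int (mdeg (mon x)) = d}. smul (a x) (Xmon n X (mon x) (gen x)))"
    using assms by (intro homogeneous_component) (auto intro!: subspace_scale[OF subspace_Md] Xmon_Md)
  also have "\<dots> \<in> span (degree_terms H d)"
  proof (rule span_sum)
    fix x
    assume "x \<in> {x\<in>A. deg x + int (mdeg (mon x)) = d}"
    then have "Xmon n X (mon x) (gen x) \<in> degree_terms H d"
      using assms(4) unfolding degree_terms_def by blast
    then show "smul (a x) (Xmon n X (mon x) (gen x)) \<in> span (degree_terms H d)"
      by (simp add: span_scale span_base)
  qed
  finally show ?thesis .
qed

lemma fin_gen_homogeneous_span: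
  assumes "fin_gen_R n smul X"
  obtains H where "finite H" "\<And>k h. (k, h) \<in> H \<Longrightarrow> h \<in> Md k"
    "\<And>d. Md d \<subseteq> span (degree_terms H d)"
proof -
  obtain G where G: "finite G"
    "\<And>v. \<exists>c. (\<forall>g\<in>G. c g \<in> polyR n) \<and> v = (\<Sum>g\<in>G. pact n smul X (c g) g)"
    using assms unfolding fin_gen_R_def by blast
  obtain cg where cg: "\<And>g. finite {k. cg g k \<noteq> 0}" "\<And>g k. cg g k \<in> Md k"
    "\<And>g. g = (\<Sum>k\<in>{k. cg g k \<noteq> 0}. cg g k)"
    using graded_decomp by metis
  define S where "S g = {k. cg g k \<noteq> 0}" for g
  define H where "H = (\<lambda>(g, k). (k, cg g k)) ` Sigma G S"
  have H_Md: "h \<in> Md k" if "(k, h) \<in> H" for k h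
    using that cg(2) by (auto simp: H_def)
  have H_I: "(k, cg g k) \<in> H" if "g \<in> G" "k \<in> S g" for g k
    using that by (force simp: H_def)
  have "v \<in> span (degree_terms H d)" if v: "v \<in> Md d" for v d
  proof -
    obtain c where c: "\<forall>g\<in>G. c g \<in> polyR n" "v = (\<Sum>g\<in>G. pact n smul X (c g) g)"
      using G(2) by blast
    define A where "A = Sigma G (\<lambda>g. Poly_Mapping.keys (c g) \<times> S g)"
    have "pact n smul X (c g) g = (\<Sum>(\<alpha>, k)\<in>Poly_Mapping.keys (c g) \<times> S g.
        smul (Poly_Mapping.lookup (c g) \<alpha>) (Xmon n X \<alpha> (cg g k)))" for g
      unfolding pact_def S_def
      by (subst (1) cg(3)[of g]) (simp add: linear_sum[OF linear_Xmon] scale_sum_right sum.cartesian_product)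
    then have "v = (\<Sum>(g, \<alpha>, k)\<in>A. smul (Poly_Mapping.lookup (c g) \<alpha>) (Xmon n X \<alpha> (cg g k)))"
      using c(2) G(1) cg(1) unfolding A_def by (simp add: sum.Sigma S_def)
    moreover have "finite A"
      using G(1) cg(1) by (simp add: A_def S_def)
    ultimately show ?thesis
      using v c(1) H_Md H_I
      by (intro sum_in_span_degree_terms[where deg = "\<lambda>(g, \<alpha>, k). k" and gen = "\<lambda>(g, \<alpha>, k). cg g k"
            and mon = "\<lambda>(g, \<alpha>, k). \<alpha>" and a = "\<lambda>(g, \<alpha>, k). Poly_Mapping.lookup (c g) \<alpha>"])
        (auto simp: case_prod_beta A_def polyR_def)
  qed
  moreover have "finite H"
    using G(1) cg(1) by (simp add: H_def S_def)
  ultimately show ?thesis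
    using that H_Md by blast
qed

end

section \<open>Generalized Eulerian modules\<close>

locale eulerian = graded_weyl_action +
  assumes euler_nilpotent:
    "z \<in> Md d \<Longrightarrow> \<exists>a. ((\<lambda>v. euler_op n X D v - smul (of_int d) v) ^^ a) z = 0"
begin

lemma linear_euler_op: "Vector_Spaces.linear smul smul (euler_op n X D)"
  unfolding euler_op_def[abs_def]
  by (intro linear_compose_sum ballI Vector_Spaces.linear_compose[OF linear_D linear_X, unfolded o_def])
    simp_all

lemma euler_op_Md: "z \<in> Md d \<Longrightarrow> euler_op n X D z \<in> Md d"
  unfolding euler_op_def
  by (rule subspace_sum[OF subspace_Md]) (metis D_Md X_Md diff_add_cancel lessThan_iff)

lemma euler_op_onto_Md:
  assumes "z \<in> Md d" "d \<noteq> 0"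
  shows "\<exists>w\<in>Md d. z = euler_op n X D w"
proof -
  define T where "T v = euler_op n X D v - smul (of_int d) v" for v
  obtain a where "(T ^^ a) z = 0"
    using euler_nilpotent[OF assms(1)] unfolding T_def by blast
  then show ?thesis
    using assms(1)
  proof (induct a arbitrary: z)
    case 0
    then show ?case
      using subspace_0[OF subspace_Md] linear_0[OF linear_euler_op] by auto
  next
    case (Suc a)
    have "T z \<in> Md d"
      unfolding T_def using Suc.prems(2)
      by (intro subspace_diff[OF subspace_Md] euler_op_Md subspace_scale[OF subspace_Md])
    moreover have "(T ^^ a) (T z) = 0"
      using Suc.prems(1) by (simp add: funpow_Suc_right del: funpow.simps)
    ultimately obtain w where w: "w \<in> Md d" "T z = euler_op n X D w"
      using Suc.hyps by blast
    have "smul (of_int d) z = euler_op n X D (z - w)"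
      using w(2) unfolding T_def by (simp add: linear_diff[OF linear_euler_op] algebra_simps)
    then have "smul (inverse (of_int d)) (smul (of_int d) z) =
        euler_op n X D (smul (inverse (of_int d)) (z - w))"
      by (simp add: linear_scale[OF linear_euler_op])
    then have "z = euler_op n X D (smul (inverse (of_int d)) (z - w))"
      using assms(2) by simp
    moreover have "smul (inverse (of_int d)) (z - w) \<in> Md d"
      using Suc.prems(2) w(1) by (intro subspace_scale[OF subspace_Md] subspace_diff[OF subspace_Md])
    ultimately show ?case
      by blast
  qed
qed

lemma Md_in_X_image:
  assumes "z \<in> Md d" "d \<noteq> 0"
  shows "\<exists>w. (\<forall>i<n. w i \<in> Md (d - 1)) \<and> z = (\<Sum>i<n. X i (w i))"
proof -
  obtain w where "w \<in> Md d" "z = euler_op n X D w"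
    using euler_op_onto_Md[OF assms] by blast
  then show ?thesis
    unfolding euler_op_def by (intro exI[of _ "\<lambda>i. D i w"]) (auto intro: D_Md)
qed

end

locale fg_eulerian = eulerian +
  assumes fin_gen: "fin_gen_R n smul X"
begin

lemma Md_bounded_below:
  obtains L where "\<And>d v. d < L \<Longrightarrow> v \<in> Md d \<Longrightarrow> v = 0"
proof -
  obtain H where H: "finite H" "\<And>k h. (k, h) \<in> H \<Longrightarrow> h \<in> Md k"
    "\<And>d. Md d \<subseteq> span (degree_terms H d)"
    by (rule fin_gen_homogeneous_span[OF fin_gen], rule that)
  define L where "L = Min (insert 0 (fst ` H))"
  have "v = 0" if "d < L" "v \<in> Md d" for d v
  proof -
    have L_le: "L \<le> k" if "(k, h) \<in> H" for k h
      unfolding L_def using H(1) that by (intro Min_le) force+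
    have no_terms: "degree_terms H d = {}"
    proof (intro equals0I)
      fix x
      assume "x \<in> degree_terms H d"
      then obtain \<alpha> k h where "(k, h) \<in> H" "k + int (mdeg \<alpha>) = d"
        unfolding degree_terms_def by blast
      then show False
        using L_le \<open>d < L\<close> by fastforce
    qed
    have "Md d \<subseteq> {0}"
      using H(3)[of d] unfolding no_terms span_empty .
    then show "v = 0"
      using \<open>v \<in> Md d\<close> by blast
  qed
  then show ?thesis
    using that by blast
qed

lemma Md_negative:
  assumes "d < 0" "v \<in> Md d"
  shows "v = 0"
proof -
  obtain L where L: "\<And>d v. d < L \<Longrightarrow> v \<in> Md d \<Longrightarrow> v = 0"
    using Md_bounded_below by blast
  have "\<forall>d v. d < L + int j \<longrightarrow> d < 0 \<longrightarrow> v \<in> Md d \<longrightarrow> v = 0" for j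
  proof (induct j)
    case 0
    then show ?case using L by simp
  next
    case (Suc j)
    show ?case
    proof (intro allI impI)
      fix d v
      assume "d < L + int (Suc j)" "d < 0" "v \<in> Md d"
      then obtain w where w: "\<forall>i<n. w i \<in> Md (d - 1)" "v = (\<Sum>i<n. X i (w i))"
        using Md_in_X_image by blast
      then have "\<forall>i<n. w i = 0"
        using Suc[rule_format, of "d - 1"] \<open>d < L + int (Suc j)\<close> \<open>d < 0\<close> by auto
      then show "v = 0"
        using w(2) by (simp add: linear_0 linear_X)
    qed
  qed
  moreover have "d < L + int (nat (d - L + 1))"
    by (cases "d - L + 1 \<ge> 0") auto
  ultimately show ?thesis
    using assms by blast
qed

lemma D_Md0: "i < n \<Longrightarrow> e \<in> Md 0 \<Longrightarrow> D i e = 0"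
  using D_Md[of i e 0] Md_negative[of "-1"] by simp

lemma Md0_finite_span:
  obtains H0 where "finite H0" "Md 0 \<subseteq> span H0"
proof -
  obtain H where H: "finite H" "\<And>k h. (k, h) \<in> H \<Longrightarrow> h \<in> Md k"
    "\<And>d. Md d \<subseteq> span (degree_terms H d)"
    by (rule fin_gen_homogeneous_span[OF fin_gen], rule that)
  have "degree_terms H 0 \<subseteq> insert 0 (snd ` H)"
  proof
    fix x
    assume "x \<in> degree_terms H 0"
    then obtain \<alpha> k h where x: "x = Xmon n X \<alpha> h" "(k, h) \<in> H"
      "Poly_Mapping.keys \<alpha> \<subseteq> {..<n}" "k + int (mdeg \<alpha>) = 0"
      unfolding degree_terms_def by blast
    show "x \<in> insert 0 (snd ` H)"
    proof (cases "k < 0")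
      case True
      then have "h = 0"
        using Md_negative H(2)[OF x(2)] by simp
      then show ?thesis
        using x(1) by (simp add: linear_0[OF linear_Xmon])
    next
      case False
      then have "\<alpha> = 0"
        using x(3,4) by (intro mdeg_eq_0_imp_zero) auto
      moreover have "h \<in> snd ` H"
        using x(2) by (metis image_eqI snd_conv)
      ultimately show ?thesis
        using x(1) by simp
    qed
  qed
  then have "Md 0 \<subseteq> span (insert 0 (snd ` H))"
    by (rule order_trans[OF H(3)[of 0] span_mono])
  then show ?thesis
    using H(1) by (intro that[of "snd ` H"]) simp_all
qed

lemma Md_subset_Rspan:
  assumes "Md 0 \<subseteq> span E"
  shows "Md d \<subseteq> Rspan E"
proof -
  have Md_nat: "Md (int k) \<subseteq> Rspan E" for k
  proof (induct k)
    case 0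
    then show ?case
      using assms span_minimal[OF subset_Rspan subspace_Rspan, of E] by simp
  next
    case (Suc k)
    show ?case
    proof
      fix z
      assume "z \<in> Md (int (Suc k))"
      then obtain w where w: "\<forall>i<n. w i \<in> Md (int k)" "z = (\<Sum>i<n. X i (w i))"
        using Md_in_X_image[of z "int (Suc k)"] by auto
      have "X i (w i) \<in> Rspan E" if "i < n" for i
        using X_Rspan[OF that] w(1) Suc that by blast
      then show "z \<in> Rspan E"
        unfolding w(2) by (intro subspace_sum[OF subspace_Rspan]) simp
    qed
  qed
  show ?thesis
  proof (cases "d < 0")
    case True
    then show ?thesis
      using Md_negative subspace_0[OF subspace_Rspan] by blast
  next
    case False
    then show ?thesis
      using Md_nat[of "nat d"] by simp
  qed
qed

lemma Rspan_eq_UNIV: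
  assumes "Md 0 \<subseteq> span E"
  shows "Rspan E = UNIV"
proof -
  have "v \<in> Rspan E" for v
  proof -
    obtain c where c: "\<forall>d. c d \<in> Md d" "v = (\<Sum>d\<in>{d. c d \<noteq> 0}. c d)"
      using graded_decomp[of v] by blast
    show ?thesis
      unfolding c(2) using c(1) Md_subset_Rspan[OF assms]
      by (intro subspace_sum[OF subspace_Rspan]) blast
  qed
  then show ?thesis
    by blast
qed

lemma free_deg0_if_basis:
  assumes "B \<subseteq> Md 0" "independent B" "Md 0 \<subseteq> span B" "finite B"
  shows "free_deg0 n smul X Md (card B)"
proof -
  define m where "m = card B"
  obtain e where e: "bij_betw e {..<m} B"
    using ex_bij_betw_nat_finite[OF assms(4)] by (auto simp: m_def atLeast0LessThan)
  then have e_B: "e ` {..<m} = B" and "inj_on e {..<m}"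
    by (auto simp: bij_betw_def)
  moreover have "\<forall>j<m. \<forall>i<n. D i (e j) = 0"
    using e_B assms(1) by (auto intro: D_Md0)
  ultimately have "inj_on (coord_sum e m) (poly_tuples m)"
    using assms(2) by (intro inj_on_coord_sum) auto
  moreover have "coord_sum e m ` poly_tuples m = UNIV"
    using Rspan_subset_coord_sum_image[of e m] Rspan_eq_UNIV[of "e ` {..<m}"] assms(3) e_B
    by auto
  ultimately show ?thesis
    unfolding free_deg0_def m_def[symmetric]
    using e_B assms(1) by (intro exI[of _ e] conjI) (auto simp: bij_betw_def coord_sum_def[abs_def] poly_tuples_def)
qed

end

lemma fg_eulerianI:
  assumes "graded_weyl_module n smul X D Md" "generalized_eulerian n smul X D Md" "fin_gen_R n smul X"
  shows "fg_eulerian smul n X D Md"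
proof -
  have "weyl_module n smul X D"
    using assms(1) unfolding graded_weyl_module_def by blast
  then have weyl: "vector_space smul"
    "\<And>i. i < n \<Longrightarrow> Vector_Spaces.linear smul smul (X i)"
    "\<And>i. i < n \<Longrightarrow> Vector_Spaces.linear smul smul (D i)"
    "\<And>i j v. i < n \<Longrightarrow> j < n \<Longrightarrow> X i (X j v) = X j (X i v)"
    "\<And>i j v. i < n \<Longrightarrow> j < n \<Longrightarrow> D i (X j v) - X j (D i v) = (if i = j then v else 0)"
    unfolding weyl_module_def by blast+
  have graded: "\<And>d. Modules.module.subspace smul (Md d)"
    "\<And>v. \<exists>!c :: int \<Rightarrow> 'b. finite {d. c d \<noteq> 0} \<and> (\<forall>d. c d \<in> Md d) \<and> v = (\<Sum>d\<in>{d. c d \<noteq> 0}. c d)"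
    "\<And>i d v. i < n \<Longrightarrow> v \<in> Md d \<Longrightarrow> X i v \<in> Md (d + 1)"
    "\<And>i d v. i < n \<Longrightarrow> v \<in> Md d \<Longrightarrow> D i v \<in> Md (d - 1)"
    using assms(1) unfolding graded_weyl_module_def by blast+
  have euler: "\<And>z d. z \<in> Md d \<Longrightarrow> \<exists>a. ((\<lambda>v. euler_op n X D v - smul (of_int d) v) ^^ a) z = 0"
    using assms(2) unfolding generalized_eulerian_def by blast
  show ?thesis
    unfolding fg_eulerian_def fg_eulerian_axioms_def eulerian_def eulerian_axioms_def
      graded_weyl_action_def graded_weyl_action_axioms_def weyl_action_def weyl_action_axioms_def
    by (intro conjI allI impI weyl(1) graded(1,2) assms(3); (rule weyl(2-5) graded(3-4) euler)?; assumption)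
qed

theorem mainTheorem11:
  fixes n :: nat
    and smul :: "'k::field_char_0 \<Rightarrow> 'm::ab_group_add \<Rightarrow> 'm"
    and X D :: "nat \<Rightarrow> 'm \<Rightarrow> 'm"
    and Md :: "int \<Rightarrow> 'm set"
  assumes "graded_weyl_module n smul X D Md"
    and "generalized_eulerian n smul X D Md"
    and "fin_gen_R n smul X"
  shows "(\<forall>v::'m. v = 0) \<or> (\<exists>m\<ge>1. free_deg0 n smul X Md m)"
proof -
  interpret fg_eulerian smul n X D Md
    using assms by (rule fg_eulerianI)
  obtain B where B: "B \<subseteq> Md 0" "independent B" "Md 0 \<subseteq> span B"
    by (rule basis_exists)
  obtain H0 where "finite H0" "Md 0 \<subseteq> span H0"
    by (rule Md0_finite_span)
  then have "finite B"
    using B(1,2) independent_span_bound by blast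
  show ?thesis
  proof (cases "B = {}")
    case True
    then have "Rspan {} = UNIV"
      using Rspan_eq_UNIV B(3) by blast
    then show ?thesis
      by (simp add: Rspan_def) (metis UNIV_I singletonD)
  next
    case False
    then have "card B \<ge> 1"
      using \<open>finite B\<close> by (simp add: Suc_le_eq card_gt_0_iff)
    then show ?thesis
      using free_deg0_if_basis[OF B \<open>finite B\<close>] by blast
  qed
qed

end
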